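(* For every nonnegative integer $n$, $$\sum_{k=0}^{\infty}(-1)^k(4k+1)\,\frac{(-4n)_k\,(-3n+\tfrac18)_k\,(\tfrac12)_k}{k!\,(3n+\tfrac{11}{8})_k\,(4n+\tfrac32)_k}=\left(\frac{2^8 3^3}{7^7}\right)^n\frac{(\tfrac{11}{24})_n(\tfrac38)_n(\tfrac78)_n(\tfrac{19}{24})_n(\tfrac98)_n^2}{(\tfrac{11}{56})_n(\tfrac{43}{56})_n(\tfrac{19}{56})_n(\tfrac{51}{56})_n(\tfrac{27}{56})_n(\tfrac{59}{56})_n}.$$ (The sum is finite, since $(-4n)_k=0$ for $k>4n$.)
   Context: $(a)_j=\Gamma(a+j)/\Gamma(a)=a(a+1)\cdots(a+j-1)$ denotes the rising factorial (Pochhammer symbol), with $(a)_0=1$. *)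

theory Defs
  imports Complex_Main
begin

end

theory Submission
  imports Defs
begin

(* The identity is the special case a = 1/2, N = 4n, c = 1/8 - 3n of the terminating
   very-well-poised summation at argument -1
     \<Sum>k\<le>N. (-1)^k (a+2k)/a (a)_k (-N)_k (c)_k / (k! (1+a+N)_k (1+a-c)_k)
       = (1+a)_N / (1+a-c)_N,                                   (a > 0, c < 1+a)
   after which it remains to evaluate (3/2)_{4n} / (3n+11/8)_{4n} as the product on the right.
   The summation is proved by creative telescoping in N (Wilf-Zeilberger style): with
   r_N = (1+a-c+N)/(1+a+N), the terms T_N(k) satisfy r_N T_{N+1}(k) - T_N(k) = G_N(k+1) - G_N(k)
   for an explicit certificate G_N that vanishes at k = 0 and k = N+2, so summing over k gives
   r_N S_{N+1} = S_N.  The recurrence is checked by writing T_N(k), T_{N+1}(k), G_N(k) and G_N(k+1)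
   as one common hypergeometric factor times rational functions, reducing it to a polynomial
   identity.  The product evaluation is an induction on n: both sides change by the same
   rational factor when n increases by one, after cancelling a common linear factor x + 5/8. *)

lemma pochhammer_shift:
  "pochhammer (x + 1) k * x = pochhammer x k * (x + of_nat k)"
  by (metis mult.commute pochhammer_Suc pochhammer_rec)

definition wp_term :: "real \<Rightarrow> real \<Rightarrow> nat \<Rightarrow> nat \<Rightarrow> real" where
  "wp_term a c N k = (-1)^k * ((a + 2 * real k) / a) * (pochhammer a k * pochhammer (- real N) k * pochhammer c k)
     / (fact k * pochhammer (1 + a + real N) k * pochhammer (1 + a - c) k)"

definition wp_cert :: "real \<Rightarrow> real \<Rightarrow> nat \<Rightarrow> nat \<Rightarrow> real" where
  "wp_cert a c N k = - ((-1)^k * pochhammer a k * pochhammer (- real N - 1) k * pochhammer c k * (a - c + real k) * real k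
     / (fact k * pochhammer (1 + a + real N) k * pochhammer (1 + a - c) k * a * (real N + 1)))"

(* A common hypergeometric factor: T_N, T_{N+1} and G_N are rational multiples of it. *)
definition wp_base :: "real \<Rightarrow> real \<Rightarrow> nat \<Rightarrow> nat \<Rightarrow> real" where
  "wp_base a c N k = (-1)^k * (pochhammer a k * pochhammer (- real N - 1) k * pochhammer c k)
     / (fact k * pochhammer (2 + a + real N) k * pochhammer (1 + a - c) k)"

lemma wp_term_Suc_N: "wp_term a c (Suc N) k = wp_base a c N k * ((a + 2 * real k) / a)"
proof -
  have N: "- real (Suc N) = - real N - 1" and D: "1 + a + real (Suc N) = 2 + a + real N" by simp_all
  show ?thesis unfolding wp_term_def wp_base_def N D by (simp add: mult_ac)
qed

lemma wp_term_eq_base: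
  assumes "a > 0"
  shows "wp_term a c N k = wp_base a c N k *
    ((a + 2 * real k) / a * (real N + 1 - real k) / (real N + 1) * (1 + a + real N + real k) / (1 + a + real N))"
proof -
  define B where "B = pochhammer (- real N - 1) k"
  define D where "D = pochhammer (2 + a + real N) k"
  have "pochhammer (- real N) k * (- real N - 1) = B * (- real N - 1 + real k)"
    using pochhammer_shift[of "- real N - 1" k] unfolding B_def by simp
  then have B': "pochhammer (- real N) k = B * (real N + 1 - real k) / (real N + 1)"
    by (simp add: field_simps)
  have "D * (1 + a + real N) = pochhammer (1 + a + real N) k * (1 + a + real N + real k)"
    using pochhammer_shift[of "1 + a + real N" k] unfolding D_def by (simp add: add_ac)
  then have D': "pochhammer (1 + a + real N) k = D * (1 + a + real N) / (1 + a + real N + real k)"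
    using assms by (simp add: field_simps)
  have "D > 0" unfolding D_def using assms by (intro pochhammer_pos) simp
  then show ?thesis using assms unfolding wp_term_def wp_base_def B' D' B_def[symmetric] D_def[symmetric]
    by (simp add: field_simps)
qed

lemma wp_base_Suc:
  assumes "a > 0" and "c < 1 + a"
  shows "wp_base a c N (Suc k) = wp_base a c N k *
    (- ((a + real k) * (real k - real N - 1) * (c + real k))
      / ((real k + 1) * (2 + a + real N + real k) * (1 + a - c + real k)))"
proof -
  have "pochhammer (2 + a + real N) k > 0" "pochhammer (1 + a - c) k > 0"
    using assms by (auto intro!: pochhammer_pos)
  moreover have "2 + a + real N + real k \<noteq> 0" "1 + a - c + real k \<noteq> 0"
    using assms by linarith+
  ultimately show ?thesis
    unfolding wp_base_def pochhammer_Suc fact_Suc by (simp add: field_simps)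
qed

lemma wp_cert_eq_base:
  assumes "a > 0" and "c < 1 + a"
  shows "wp_cert a c N k = wp_base a c N k *
    (- (real k * (a - c + real k) * (1 + a + real N + real k)) / ((1 + a + real N) * a * (real N + 1)))"
proof -
  define D where "D = pochhammer (2 + a + real N) k"
  define u where "u = 1 + a + real N"
  define w where "w = real N + 1"
  have "D * u = pochhammer u k * (u + real k)"
    using pochhammer_shift[of "1 + a + real N" k] unfolding D_def u_def by (simp add: add_ac)
  moreover have "u \<noteq> 0" "u + real k \<noteq> 0" "w \<noteq> 0" unfolding u_def w_def using assms by linarith+
  ultimately have D': "pochhammer u k = D * u / (u + real k)" by (simp add: field_simps)
  have "D > 0" unfolding D_def using assms by (intro pochhammer_pos) simp
  moreover have "pochhammer (1 + a - c) k > 0" using assms by (intro pochhammer_pos) simp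
  ultimately show ?thesis using assms \<open>u \<noteq> 0\<close> \<open>u + real k \<noteq> 0\<close> \<open>w \<noteq> 0\<close>
    unfolding wp_cert_def wp_base_def u_def[symmetric] w_def[symmetric] D' D_def[symmetric]
    by (simp add: field_simps)
qed

(* G_N(k+1) via the term ratio; the factors (k+1)(2+a+N+k)(1+a-c+k) cancel. *)
lemma wp_cert_Suc_eq_base:
  assumes "a > 0" and "c < 1 + a"
  shows "wp_cert a c N (Suc k) = wp_base a c N k *
    ((a + real k) * (real k - real N - 1) * (c + real k) / ((1 + a + real N) * a * (real N + 1)))"
proof -
  define y v e q where "y = real k + 1" and "v = 2 + a + real N + real k" and "e = 1 + a - c + real k"
    and "q = (1 + a + real N) * a * (real N + 1)"
  have nz: "y \<noteq> 0" "v \<noteq> 0" "e \<noteq> 0" "q \<noteq> 0" using assms unfolding y_def v_def e_def q_def by auto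
  have "wp_cert a c N (Suc k) = wp_base a c N (Suc k) * (- (y * e * v) / q)"
    using wp_cert_eq_base[OF assms, of N "Suc k"] unfolding y_def v_def e_def q_def by (simp add: algebra_simps)
  also have "\<dots> = wp_base a c N k * (- ((a + real k) * (real k - real N - 1) * (c + real k)) / (y * v * e))
      * (- (y * e * v) / q)"
    unfolding wp_base_Suc[OF assms] y_def v_def e_def ..
  also have "\<dots> = wp_base a c N k * ((a + real k) * (real k - real N - 1) * (c + real k) / q)"
    using nz by (simp add: field_simps)
  finally show ?thesis unfolding q_def .
qed

(* The rational-function identity behind the recurrence, after cancelling the common factor. *)
lemma wp_step_identity:
  fixes a c n j :: real
  assumes "a \<noteq> 0" and "1 + a + n \<noteq> 0" and "n + 1 \<noteq> 0"
  shows "(1 + a - c + n) / (1 + a + n) * ((a + 2 * j) / a)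
           - (a + 2 * j) / a * (n + 1 - j) / (n + 1) * (1 + a + n + j) / (1 + a + n)
         = (a + j) * (j - n - 1) * (c + j) / ((1 + a + n) * a * (n + 1))
           - (- (j * (a - c + j) * (1 + a + n + j)) / ((1 + a + n) * a * (n + 1)))"
proof -
  define u w where "u = 1 + a + n" and "w = n + 1"
  have "u \<noteq> 0" "w \<noteq> 0" using assms unfolding u_def w_def by simp_all
  have "(1 + a - c + n) / u * ((a + 2 * j) / a) - (a + 2 * j) / a * (n + 1 - j) / w * (u + j) / u
      = (a + 2 * j) * ((1 + a - c + n) * w - (n + 1 - j) * (u + j)) / (u * a * w)"
    using \<open>a \<noteq> 0\<close> \<open>u \<noteq> 0\<close> \<open>w \<noteq> 0\<close> by (simp add: field_simps)
  also have "(a + 2 * j) * ((1 + a - c + n) * w - (n + 1 - j) * (u + j))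
      = (a + j) * (j - n - 1) * (c + j) + j * (a - c + j) * (u + j)"
    unfolding u_def w_def by algebra
  also have "\<dots> / (u * a * w)
      = (a + j) * (j - n - 1) * (c + j) / (u * a * w) - (- (j * (a - c + j) * (u + j)) / (u * a * w))"
    by (simp add: add_divide_distrib)
  finally have "(1 + a - c + n) / u * ((a + 2 * j) / a) - (a + 2 * j) / a * (n + 1 - j) / w * (u + j) / u
      = (a + j) * (j - n - 1) * (c + j) / (u * a * w) - (- (j * (a - c + j) * (u + j)) / (u * a * w))" .
  then show ?thesis unfolding u_def w_def by (simp add: add_ac)
qed

lemma wp_telescoping:
  assumes "a > 0" and "c < 1 + a"
  shows "(1 + a - c + real N) / (1 + a + real N) * wp_term a c (Suc N) k - wp_term a c N k
       = wp_cert a c N (Suc k) - wp_cert a c N k"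
proof -
  let ?X = "wp_base a c N k" and ?j = "real k" and ?n = "real N"
  have "(1 + a - c + ?n) / (1 + a + ?n) * wp_term a c (Suc N) k - wp_term a c N k
      = ?X * ((1 + a - c + ?n) / (1 + a + ?n) * ((a + 2 * ?j) / a)
          - (a + 2 * ?j) / a * (?n + 1 - ?j) / (?n + 1) * (1 + a + ?n + ?j) / (1 + a + ?n))"
    unfolding wp_term_Suc_N wp_term_eq_base[OF assms(1)] by (simp only: right_diff_distrib mult.left_commute)
  also have "\<dots> = ?X * ((a + ?j) * (?j - ?n - 1) * (c + ?j) / ((1 + a + ?n) * a * (?n + 1))
          - (- (?j * (a - c + ?j) * (1 + a + ?n + ?j)) / ((1 + a + ?n) * a * (?n + 1))))"
    using assms by (subst wp_step_identity) auto
  also have "\<dots> = wp_cert a c N (Suc k) - wp_cert a c N k"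
    unfolding wp_cert_Suc_eq_base[OF assms] wp_cert_eq_base[OF assms, of N k] by (rule right_diff_distrib)
  finally show ?thesis .
qed

lemma wp_term_vanishes: "N < k \<Longrightarrow> wp_term a c N k = 0"
  unfolding wp_term_def using pochhammer_of_nat_eq_0_lemma[of N k, where 'a=real] by simp

lemma wp_cert_boundary: "wp_cert a c N 0 = 0" "wp_cert a c N (N + 2) = 0"
proof -
  show "wp_cert a c N 0 = 0" unfolding wp_cert_def by simp
  have "- real N - 1 = - real (Suc N)" by simp
  then have "pochhammer (- real N - 1) (N + 2) = 0"
    by (simp only:) (rule pochhammer_of_nat_eq_0_lemma, simp)
  then show "wp_cert a c N (N + 2) = 0" unfolding wp_cert_def by simp
qed

lemma wp_summation:
  assumes "a > 0" and "c < 1 + a"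
  shows "(\<Sum>k\<le>N. wp_term a c N k) = pochhammer (1 + a) N / pochhammer (1 + a - c) N"
proof (induction N)
  case 0
  then show ?case using assms by (simp add: wp_term_def)
next
  case (Suc N)
  define r where "r = (1 + a - c + real N) / (1 + a + real N)"
  define S where "S = (\<Sum>k\<le>Suc N. wp_term a c (Suc N) k)"
  have "r * S - (\<Sum>k\<le>Suc N. wp_term a c N k) = (\<Sum>k<N + 2. wp_cert a c N (Suc k) - wp_cert a c N k)"
    unfolding S_def sum_distrib_left sum_subtractf[symmetric] r_def wp_telescoping[OF assms]
    by (simp add: lessThan_Suc_atMost)
  also have "\<dots> = 0" by (simp only: sum_lessThan_telescope wp_cert_boundary)
  finally have "r * S = (\<Sum>k\<le>N. wp_term a c N k)"
    using wp_term_vanishes[of N "Suc N"] by simp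
  moreover have "r \<noteq> 0" unfolding r_def using assms by simp
  ultimately have "S = pochhammer (1 + a) N / pochhammer (1 + a - c) N / r"
    unfolding Suc.IH by (metis nonzero_mult_div_cancel_left)
  moreover have "pochhammer (1 + a - c) N \<noteq> 0" "1 + a - c + real N \<noteq> 0" "1 + a + real N \<noteq> 0"
    using assms by (auto simp: pochhammer_eq_0_iff)
  ultimately show ?case
    unfolding S_def[symmetric] pochhammer_Suc r_def by (simp add: field_simps)
qed

definition closed_form :: "nat \<Rightarrow> real" where
  "closed_form n = ((2^8 * 3^3) / 7^7 :: real) ^ n *
     (pochhammer (11/24) n * pochhammer (3/8) n * pochhammer (7/8) n * pochhammer (19/24) n
       * (pochhammer (9/8) n) ^ 2)
     / (pochhammer (11/56) n * pochhammer (43/56) n * pochhammer (19/56) n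
       * pochhammer (51/56) n * pochhammer (27/56) n * pochhammer (59/56) n)"

lemma closed_form_Suc:
  "closed_form (Suc n) = closed_form n * ((2^8 * 3^3) / 7^7 *
     ((11/24 + real n) * (3/8 + real n) * (7/8 + real n) * (19/24 + real n) * (9/8 + real n)^2)
     / ((11/56 + real n) * (43/56 + real n) * (19/56 + real n) * (51/56 + real n)
       * (27/56 + real n) * (59/56 + real n)))"
  unfolding closed_form_def pochhammer_Suc by (simp add: field_simps power2_eq_square)

(* The same rational function arises from the Pochhammer quotient: numerator and denominator
   share the factor x + 5/8. *)
lemma closed_form_step_factor:
  fixes x :: real
  assumes "x \<ge> 0"
  shows "pochhammer (3/2 + 4 * x) 4 * pochhammer (3 * x + 11/8) 3 / pochhammer (7 * x + 11/8) 7
       = (2^8 * 3^3) / 7^7 * ((11/24 + x) * (3/8 + x) * (7/8 + x) * (19/24 + x) * (9/8 + x)^2)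
         / ((11/56 + x) * (43/56 + x) * (19/56 + x) * (51/56 + x) * (27/56 + x) * (59/56 + x))"
proof -
  have num: "pochhammer (3/2 + 4 * x) 4 * pochhammer (3 * x + 11/8) 3
      = ((2^8 * 3^3) * ((11/24 + x) * (3/8 + x) * (7/8 + x) * (19/24 + x) * (9/8 + x)^2)) * (5/8 + x)"
    by (simp add: eval_nat_numeral pochhammer_Suc field_simps power2_eq_square)
  have den: "pochhammer (7 * x + 11/8) 7
      = (7^7 * ((11/56 + x) * (43/56 + x) * (19/56 + x) * (51/56 + x) * (27/56 + x) * (59/56 + x))) * (5/8 + x)"
    by (simp add: eval_nat_numeral pochhammer_Suc field_simps)
  have "5/8 + x \<noteq> 0" using assms by simp
  then show ?thesis unfolding num den mult_divide_mult_cancel_right by simp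
qed

lemma pochhammer_quotient_Suc:
  "pochhammer (3/2) (4 * Suc n) / pochhammer (3 * real (Suc n) + 11/8) (4 * Suc n)
     = pochhammer (3/2) (4 * n) / pochhammer (3 * real n + 11/8) (4 * n)
       * (pochhammer (3/2 + 4 * real n) 4 * pochhammer (3 * real n + 11/8) 3
          / pochhammer (7 * real n + 11/8) 7)"
proof -
  define x where "x = 3 * real n + 11/8"
  have num: "pochhammer (3/2 :: real) (4 * Suc n) = pochhammer (3/2) (4 * n) * pochhammer (3/2 + 4 * real n) 4"
    using pochhammer_product'[of "3/2 :: real" "4 * n" 4] by (simp add: add.commute)
  have "pochhammer x 3 * pochhammer (x + 3) (4 * Suc n) = pochhammer x (4 * n + 7)"
    using pochhammer_product'[of x 3 "4 * Suc n"] by (simp add: ac_simps)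
  also have "\<dots> = pochhammer x (4 * n) * pochhammer (x + real (4 * n)) 7"
    by (rule pochhammer_product')
  finally have den: "pochhammer x 3 * pochhammer (3 * real (Suc n) + 11/8) (4 * Suc n)
      = pochhammer x (4 * n) * pochhammer (7 * real n + 11/8) 7"
    unfolding x_def by (simp add: algebra_simps)
  have "pochhammer x 3 > 0" "pochhammer x (4 * n) > 0" "pochhammer (7 * real n + 11/8) 7 > 0"
    "pochhammer (3 * real (Suc n) + 11/8) (4 * Suc n) > 0"
    unfolding x_def by (auto intro!: pochhammer_pos)
  with num den show ?thesis unfolding x_def[symmetric] by (simp add: field_simps)
qed

(* Evaluation of the right-hand side of the summation at a = 1/2, N = 4n, c = 1/8 - 3n. *)
lemma pochhammer_quotient_closed_form:
  "pochhammer (3/2) (4 * n) / pochhammer (3 * real n + 11/8) (4 * n) = closed_form n"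
proof (induction n)
  case 0
  then show ?case by (simp add: closed_form_def)
next
  case (Suc n)
  then show ?case
    unfolding pochhammer_quotient_Suc closed_form_Suc closed_form_step_factor[OF of_nat_0_le_iff] by simp
qed

theorem theorem10:
  fixes n :: nat
  shows "(\<lambda>k. (-1) ^ k * (4 * real k + 1) *
            (pochhammer (- 4 * real n) k * pochhammer (- 3 * real n + 1/8) k * pochhammer (1/2) k)
          / (fact k * pochhammer (3 * real n + 11/8) k * pochhammer (4 * real n + 3/2) k))
         sums
         (((2^8 * 3^3) / 7^7 :: real) ^ n *
           (pochhammer (11/24) n * pochhammer (3/8) n * pochhammer (7/8) n * pochhammer (19/24) n
             * (pochhammer (9/8) n) ^ 2)
           / (pochhammer (11/56) n * pochhammer (43/56) n * pochhammer (19/56) n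
             * pochhammer (51/56) n * pochhammer (27/56) n * pochhammer (59/56) n))"
proof -
  define c :: real where "c = - 3 * real n + 1/8"
  have params: "- real (4 * n) = - 4 * real n" "1 + 1/2 + real (4 * n) = 4 * real n + 3/2"
    "1 + 1/2 - c = 3 * real n + 11/8" "(1/2 + 2 * real k) / (1/2) = 4 * real k + (1 :: real)" for k
    unfolding c_def by simp_all
  have summand: "(-1) ^ k * (4 * real k + 1) *
            (pochhammer (- 4 * real n) k * pochhammer (- 3 * real n + 1/8) k * pochhammer (1/2) k)
          / (fact k * pochhammer (3 * real n + 11/8) k * pochhammer (4 * real n + 3/2) k)
        = (if k \<in> {..4 * n} then wp_term (1/2) c (4 * n) k else 0)" for k
  proof -
    have "wp_term (1/2) c (4 * n) k = (-1) ^ k * (4 * real k + 1) *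
            (pochhammer (- 4 * real n) k * pochhammer (- 3 * real n + 1/8) k * pochhammer (1/2) k)
          / (fact k * pochhammer (3 * real n + 11/8) k * pochhammer (4 * real n + 3/2) k)"
      unfolding wp_term_def params unfolding c_def by (simp only: mult_ac)
    then show ?thesis using wp_term_vanishes[of "4 * n" k "1/2" c] by auto
  qed
  have "(\<lambda>k. if k \<in> {..4 * n} then wp_term (1/2) c (4 * n) k else 0)
          sums (\<Sum>k\<le>4 * n. wp_term (1/2) c (4 * n) k)"
    by (rule sums_If_finite_set) simp
  also have "(\<Sum>k\<le>4 * n. wp_term (1/2) c (4 * n) k) = pochhammer (3/2) (4 * n) / pochhammer (3 * real n + 11/8) (4 * n)"
    using wp_summation[of "1/2" c "4 * n"] unfolding params(3) by (simp add: c_def)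
  finally show ?thesis
    unfolding summand pochhammer_quotient_closed_form closed_form_def .
qed

end
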